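(* Identify $\mathbb{S}_n$ with its image in $\mathrm{End}_K(P_n)$ under the action described in the context. Then $$G_n=\{\sigma_\varphi\mid \varphi\in\mathrm{Aut}_K(P_n)\ \text{such that}\ \varphi\mathbb{S}_n\varphi^{-1}=\mathbb{S}_n\},\qquad \sigma_\varphi(a):=\varphi a\varphi^{-1}\ (a\in\mathbb{S}_n).$$
   Context: $K$ is a field of characteristic zero. $\mathbb{S}_n$ is the $K$-algebra generated by $x_1,\dots,x_n,y_1,\dots,y_n$ with defining relations $y_ix_i=1$ ($1\le i\le n$) and $[x_i,y_j]=[x_i,x_j]=[y_i,y_j]=0$ for $i\ne j$; $G_n=\mathrm{Aut}_{K\text{-alg}}(\mathbb{S}_n)$. $P_n=K[x_1,\dots,x_n]$ is a faithful $\mathbb{S}_n$-module via $x_i*x^\alpha=x^{\alpha+e_i}$ and $y_i*x^\alpha=x^{\alpha-e_i}$ if $\alpha_i>0$, $y_i*x^\alpha=0$ if $\alpha_i=0$ (here $x^\alpha=x_1^{\alpha_1}\cdots x_n^{\alpha_n}$, $e_i$ the standard basis vectors of $\mathbb{Z}^n$). $\mathrm{Aut}_K(P_n)$ is the group of invertible $K$-linear maps $P_n\to P_n$. *)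

theory Defs
  imports "HOL-Library.FuncSet"
begin

text \<open>The index set of variables is a finite type 'n with CARD('n) = n.
  An element of P_n is its coefficient function on exponent vectors
  (of type 'n \<Rightarrow> nat) with finite support.\<close>

type_synonym ('n, 'k) poly_n = "('n \<Rightarrow> nat) \<Rightarrow> 'k"
type_synonym ('n, 'k) op_n = "('n, 'k) poly_n \<Rightarrow> ('n, 'k) poly_n"

definition Pn :: "('n::finite, 'k::field_char_0) poly_n set" where
  "Pn = {p. finite {a. p a \<noteq> 0}}"

definition padd :: "('n, 'k::field_char_0) poly_n \<Rightarrow> ('n, 'k) poly_n \<Rightarrow> ('n, 'k) poly_n" where
  "padd p q = (\<lambda>a. p a + q a)"

definition psmult :: "'k::field_char_0 \<Rightarrow> ('n, 'k) poly_n \<Rightarrow> ('n, 'k) poly_n" where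
  "psmult c p = (\<lambda>a. c * p a)"

definition Xop :: "'n::finite \<Rightarrow> ('n, 'k::field_char_0) op_n" where
  "Xop i = restrict (\<lambda>p a. if 0 < a i then p (a(i := a i - 1)) else 0) Pn"

definition Yop :: "'n::finite \<Rightarrow> ('n, 'k::field_char_0) op_n" where
  "Yop i = restrict (\<lambda>p a. p (a(i := a i + 1))) Pn"

definition ocomp :: "('n::finite, 'k::field_char_0) op_n \<Rightarrow> ('n, 'k) op_n \<Rightarrow> ('n, 'k) op_n" where
  "ocomp f g = restrict (f \<circ> g) Pn"

definition oadd :: "('n::finite, 'k::field_char_0) op_n \<Rightarrow> ('n, 'k) op_n \<Rightarrow> ('n, 'k) op_n" where
  "oadd f g = restrict (\<lambda>p. padd (f p) (g p)) Pn"

definition osmult :: "'k::field_char_0 \<Rightarrow> ('n::finite, 'k) op_n \<Rightarrow> ('n, 'k) op_n" where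
  "osmult c f = restrict (\<lambda>p. psmult c (f p)) Pn"

definition oone :: "('n::finite, 'k::field_char_0) op_n" where
  "oone = restrict id Pn"

definition lin_on_Pn :: "('n::finite, 'k::field_char_0) op_n \<Rightarrow> bool" where
  "lin_on_Pn f \<longleftrightarrow> (\<forall>p\<in>Pn. \<forall>q\<in>Pn. f (padd p q) = padd (f p) (f q))
                   \<and> (\<forall>c. \<forall>p\<in>Pn. f (psmult c p) = psmult c (f p))"

definition AutK :: "('n::finite, 'k::field_char_0) op_n set" where
  "AutK = {\<phi>. \<phi> \<in> Pn \<rightarrow>\<^sub>E Pn \<and> lin_on_Pn \<phi> \<and> bij_betw \<phi> Pn Pn}"

definition oinv :: "('n::finite, 'k::field_char_0) op_n \<Rightarrow> ('n, 'k) op_n" where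
  "oinv \<phi> = restrict (inv_into Pn \<phi>) Pn"

inductive_set Sn :: "('n::finite, 'k::field_char_0) op_n set" where
  gen_x: "Xop i \<in> Sn"
| gen_y: "Yop i \<in> Sn"
| one: "oone \<in> Sn"
| add: "f \<in> Sn \<Longrightarrow> g \<in> Sn \<Longrightarrow> oadd f g \<in> Sn"
| smult: "f \<in> Sn \<Longrightarrow> osmult c f \<in> Sn"
| comp: "f \<in> Sn \<Longrightarrow> g \<in> Sn \<Longrightarrow> ocomp f g \<in> Sn"

definition Gn :: "(('n::finite, 'k::field_char_0) op_n \<Rightarrow> ('n, 'k) op_n) set" where
  "Gn = {\<sigma>. \<sigma> \<in> Sn \<rightarrow>\<^sub>E Sn \<and> bij_betw \<sigma> Sn Sn
          \<and> (\<forall>a\<in>Sn. \<forall>b\<in>Sn. \<sigma> (oadd a b) = oadd (\<sigma> a) (\<sigma> b)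
                           \<and> \<sigma> (ocomp a b) = ocomp (\<sigma> a) (\<sigma> b))
          \<and> (\<forall>c. \<forall>a\<in>Sn. \<sigma> (osmult c a) = osmult c (\<sigma> a))
          \<and> \<sigma> oone = oone}"

definition conj_op :: "('n::finite, 'k::field_char_0) op_n \<Rightarrow> ('n, 'k) op_n \<Rightarrow> ('n, 'k) op_n" where
  "conj_op \<phi> a = ocomp \<phi> (ocomp a (oinv \<phi>))"

definition sigma_op :: "('n::finite, 'k::field_char_0) op_n \<Rightarrow> ('n, 'k) op_n \<Rightarrow> ('n, 'k) op_n" where
  "sigma_op \<phi> = restrict (conj_op \<phi>) Sn"

end

theory Submission
  imports Defs
begin

(* The converse inclusion is a direct computation: if phi in Aut_K(P_n) normalises S_n,
   then a |-> phi a phi^-1 respects sums, scalars, products and the identity, and it is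
   injective because phi is.

   For the main inclusion the key fact is that S_n acts transitively on the nonzero
   vectors of P_n (lemma Sn_transitive): shifting, projecting onto the constant term and
   multiplying by monomials sends any nonzero u to 1, and then to any w.  Given sigma in G_n,
   let E in S_n be the projection onto constants; since E is a nonzero idempotent, so is
   sigma E, giving a nonzero w0 with sigma E w0 = w0.  Then phi (a 1) := sigma a w0 is well
   defined (a 1 = b 1 forces a E = b E), defined on all of P_n by transitivity, linear,
   intertwines a with sigma a, and is bijective again by transitivity. *)

definition xpow :: "('n \<Rightarrow> nat) \<Rightarrow> ('n, 'k::field_char_0) poly_n" where
  "xpow g = (\<lambda>a. if a = g then 1 else 0)"

definition pone :: "('n, 'k::field_char_0) poly_n" where
  "pone = xpow (\<lambda>_. 0)"

lemma padd_Pn: "p \<in> Pn \<Longrightarrow> q \<in> Pn \<Longrightarrow> padd p q \<in> Pn"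
proof -
  assume a: "p \<in> Pn" "q \<in> Pn"
  have "{a. p a + q a \<noteq> 0} \<subseteq> {a. p a \<noteq> 0} \<union> {a. q a \<noteq> 0}" by auto
  then show ?thesis using a unfolding Pn_def padd_def by (auto intro: finite_subset)
qed

lemma psmult_Pn: "p \<in> Pn \<Longrightarrow> psmult c p \<in> Pn"
proof -
  assume a: "p \<in> Pn"
  have "{a. c * p a \<noteq> 0} \<subseteq> {a. p a \<noteq> 0}" by auto
  then show ?thesis using a unfolding Pn_def psmult_def by (auto intro: finite_subset)
qed

lemma xpow_Pn: "xpow g \<in> Pn"
proof -
  have "{a. xpow g a \<noteq> (0::'k::field_char_0)} \<subseteq> {g}" by (auto simp: xpow_def)
  then show ?thesis unfolding Pn_def by (auto intro: finite_subset)
qed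

lemma pone_Pn: "pone \<in> Pn"
  unfolding pone_def by (rule xpow_Pn)

lemma pone_nonzero: "pone \<noteq> (\<lambda>_. 0)"
  unfolding pone_def xpow_def by (metis one_neq_zero)

lemma zero_Pn: "(\<lambda>_. 0) \<in> Pn"
  by (simp add: Pn_def)

lemma Xop_apply: "p \<in> Pn \<Longrightarrow> Xop i p = (\<lambda>a. if 0 < a i then p (a(i := a i - 1)) else 0)"
  by (simp add: Xop_def)

lemma Yop_apply: "p \<in> Pn \<Longrightarrow> Yop i p = (\<lambda>a. p (a(i := a i + 1)))"
  by (simp add: Yop_def)

lemma ocomp_apply: "p \<in> Pn \<Longrightarrow> ocomp f g p = f (g p)"
  by (simp add: ocomp_def)

lemma oadd_apply: "p \<in> Pn \<Longrightarrow> oadd f g p = padd (f p) (g p)"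
  by (simp add: oadd_def)

lemma osmult_apply: "p \<in> Pn \<Longrightarrow> osmult c f p = psmult c (f p)"
  by (simp add: osmult_def)

lemma oone_apply: "p \<in> Pn \<Longrightarrow> oone p = p"
  by (simp add: oone_def)

text \<open>All algebra operations produce maps that are extensional on P_n, so equality of
  operators can be tested pointwise on P_n.\<close>

lemma ops_extensional:
  "oone \<in> extensional Pn" "oadd f g \<in> extensional Pn"
  "osmult c f \<in> extensional Pn" "ocomp f g \<in> extensional Pn"
  unfolding oone_def oadd_def osmult_def ocomp_def by (rule restrict_extensional)+

lemma Xop_Pn:
  assumes "p \<in> Pn"
  shows "Xop i p \<in> Pn"
proof -
  have "{a. Xop i p a \<noteq> 0} \<subseteq> (\<lambda>a. a(i := Suc (a i))) ` {a. p a \<noteq> 0}"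
  proof
    fix a assume "a \<in> {a. Xop i p a \<noteq> 0}"
    then have h: "0 < a i" "p (a(i := a i - 1)) \<noteq> 0"
      using assms by (auto simp: Xop_apply split: if_splits)
    have "a = (\<lambda>a. a(i := Suc (a i))) (a(i := a i - 1))"
      using h(1) by (auto simp: fun_eq_iff)
    then show "a \<in> (\<lambda>a. a(i := Suc (a i))) ` {a. p a \<noteq> 0}" using h(2) by blast
  qed
  then show ?thesis using assms unfolding Pn_def by (auto intro: finite_subset)
qed

lemma Yop_Pn:
  assumes "p \<in> Pn"
  shows "Yop i p \<in> Pn"
proof -
  have "{a. Yop i p a \<noteq> 0} \<subseteq> (\<lambda>a. a(i := a i - 1)) ` {a. p a \<noteq> 0}"
  proof
    fix a assume "a \<in> {a. Yop i p a \<noteq> 0}"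
    then have h: "p (a(i := a i + 1)) \<noteq> 0" using assms by (auto simp: Yop_apply)
    have "a = (\<lambda>a. a(i := a i - 1)) (a(i := a i + 1))" by (auto simp: fun_eq_iff)
    then show "a \<in> (\<lambda>a. a(i := a i - 1)) ` {a. p a \<noteq> 0}" using h by blast
  qed
  then show ?thesis using assms unfolding Pn_def by (auto intro: finite_subset)
qed

lemma Sn_linear_endo:
  "f \<in> Sn \<Longrightarrow> f \<in> extensional Pn \<and> (\<forall>p\<in>Pn. f p \<in> Pn) \<and> lin_on_Pn f"
proof (induction rule: Sn.induct)
  case (gen_x i)
  have "lin_on_Pn (Xop i)" unfolding lin_on_Pn_def
    by (simp add: Xop_apply padd_Pn psmult_Pn) (simp add: padd_def psmult_def fun_eq_iff)
  moreover have "Xop i \<in> extensional Pn" unfolding Xop_def by (rule restrict_extensional)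
  ultimately show ?case using Xop_Pn by blast
next
  case (gen_y i)
  have "lin_on_Pn (Yop i)" unfolding lin_on_Pn_def
    by (simp add: Yop_apply padd_Pn psmult_Pn) (simp add: padd_def psmult_def fun_eq_iff)
  moreover have "Yop i \<in> extensional Pn" unfolding Yop_def by (rule restrict_extensional)
  ultimately show ?case using Yop_Pn by blast
next
  case one
  then show ?case
    by (simp add: ops_extensional oone_apply lin_on_Pn_def padd_Pn psmult_Pn)
next
  case (add f g)
  then show ?case
    by (simp add: ops_extensional oadd_apply lin_on_Pn_def padd_Pn psmult_Pn)
       (simp add: padd_def psmult_def fun_eq_iff algebra_simps)
next
  case (smult f c)
  then show ?case
    by (simp add: ops_extensional osmult_apply lin_on_Pn_def padd_Pn psmult_Pn)
       (simp add: padd_def psmult_def fun_eq_iff algebra_simps)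
next
  case (comp f g)
  then show ?case
    by (simp add: ops_extensional ocomp_apply lin_on_Pn_def padd_Pn psmult_Pn)
qed

lemma Sn_extensional: "f \<in> Sn \<Longrightarrow> f \<in> extensional Pn"
  using Sn_linear_endo by blast

lemma Sn_Pn: "f \<in> Sn \<Longrightarrow> p \<in> Pn \<Longrightarrow> f p \<in> Pn"
  using Sn_linear_endo by blast

lemma Sn_smult: "f \<in> Sn \<Longrightarrow> p \<in> Pn \<Longrightarrow> f (psmult c p) = psmult c (f p)"
  using Sn_linear_endo unfolding lin_on_Pn_def by blast

lemma Sn_zero: "f \<in> Sn \<Longrightarrow> f (\<lambda>_. 0) = (\<lambda>_. 0)"
  using Sn_smult[of f "\<lambda>_. 0" 0] zero_Pn by (simp add: psmult_def)

lemma zero_op_in_Sn: "osmult 0 oone \<in> Sn"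
  by (simp add: Sn.intros)

lemma zero_op_apply: "p \<in> Pn \<Longrightarrow> osmult 0 oone p = (\<lambda>_. 0)"
  by (simp add: osmult_apply oone_apply psmult_def)

section \<open>S_n acts transitively on the nonzero vectors of P_n\<close>

text \<open>Lowering one exponent strictly decreases the total degree; this is the measure
  for the inductions over exponent vectors below.\<close>

lemma total_degree_decrement:
  fixes \<beta> :: "'n::finite \<Rightarrow> nat"
  assumes "0 < \<beta> i"
  shows "sum (\<beta>(i := \<beta> i - 1)) UNIV < sum \<beta> UNIV"
proof -
  have "sum \<beta> UNIV = \<beta> i + sum \<beta> (UNIV - {i})"
    using sum.remove[of UNIV i \<beta>] by simp
  moreover have "sum (\<beta>(i := \<beta> i - 1)) UNIV = (\<beta> i - 1) + sum (\<beta>(i := \<beta> i - 1)) (UNIV - {i})"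
    using sum.remove[of UNIV i "\<beta>(i := \<beta> i - 1)"] by simp
  moreover have "sum (\<beta>(i := \<beta> i - 1)) (UNIV - {i}) = sum \<beta> (UNIV - {i})"
    by (rule sum.cong) auto
  ultimately show ?thesis using assms by simp
qed

text \<open>The monomial y^beta in S_n shifts coefficients: it sends the coefficient of
  x^(alpha + beta) to position alpha.\<close>

lemma shift_in_Sn:
  "\<exists>a\<in>(Sn :: ('n::finite, 'k::field_char_0) op_n set). \<forall>q\<in>Pn. a q = (\<lambda>\<alpha>. q (\<lambda>j. \<alpha> j + \<beta> j))"
proof (induction \<beta> rule: measure_induct_rule[where f="\<lambda>\<beta>. sum \<beta> UNIV"])
  case (less \<beta>)
  show ?case
  proof (cases "\<forall>j. \<beta> j = 0")
    case True
    then show ?thesis by (intro bexI[of _ oone]) (auto simp: oone_apply Sn.one)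
  next
    case False
    then obtain i where i: "0 < \<beta> i" by auto
    define \<beta>' where "\<beta>' = \<beta>(i := \<beta> i - 1)"
    have "sum \<beta>' UNIV < sum \<beta> UNIV" unfolding \<beta>'_def using total_degree_decrement i by blast
    then obtain a where a: "a \<in> (Sn :: ('n, 'k) op_n set)"
        "\<forall>q\<in>Pn. a q = (\<lambda>\<alpha>. q (\<lambda>j. \<alpha> j + \<beta>' j))"
      using less.IH by blast
    have shifted: "(\<lambda>j. (\<alpha>(i := \<alpha> i + 1)) j + \<beta>' j) = (\<lambda>j. \<alpha> j + \<beta> j)" for \<alpha> :: "'n \<Rightarrow> nat"
      using i by (auto simp: \<beta>'_def fun_eq_iff)
    have "ocomp (Yop i) a q = (\<lambda>\<alpha>. q (\<lambda>j. \<alpha> j + \<beta> j))" if q: "q \<in> Pn" for q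
    proof -
      have "ocomp (Yop i) a q = (\<lambda>\<alpha>. a q (\<alpha>(i := \<alpha> i + 1)))"
        using q by (simp add: ocomp_apply Yop_apply[OF Sn_Pn[OF a(1) q]])
      then show ?thesis using a(2) q shifted by simp
    qed
    moreover have "ocomp (Yop i) a \<in> Sn" using a(1) by (simp add: Sn.intros)
    ultimately show ?thesis by blast
  qed
qed

text \<open>The product of the idempotents 1 - x_i y_i over i in S kills every monomial
  whose exponent is positive at some i in S.\<close>

lemma support_projection_in_Sn:
  "finite S \<Longrightarrow> \<exists>a\<in>(Sn :: ('n::finite, 'k::field_char_0) op_n set).
     \<forall>q\<in>Pn. a q = (\<lambda>\<alpha>. if \<forall>j\<in>S. \<alpha> j = 0 then q \<alpha> else 0)"
proof (induction S rule: finite_induct)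
  case empty
  then show ?case by (intro bexI[of _ oone]) (auto simp: oone_apply Sn.one)
next
  case (insert i S)
  then obtain a where a: "a \<in> (Sn :: ('n, 'k) op_n set)"
      "\<forall>q\<in>Pn. a q = (\<lambda>\<alpha>. if \<forall>j\<in>S. \<alpha> j = 0 then q \<alpha> else 0)"
    by blast
  define e :: "('n, 'k) op_n" where "e = oadd oone (osmult (-1) (ocomp (Xop i) (Yop i)))"
  have e_apply: "e r = (\<lambda>\<alpha>. if \<alpha> i = 0 then r \<alpha> else 0)" if r: "r \<in> Pn" for r
  proof -
    have "(\<alpha>(i := \<alpha> i - 1))(i := \<alpha> i - 1 + 1) = \<alpha>" if "0 < \<alpha> i" for \<alpha> :: "'n \<Rightarrow> nat"
      using that by (auto simp: fun_eq_iff)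
    moreover have "e r = padd r (psmult (-1) (Xop i (Yop i r)))"
      using r by (simp add: e_def oadd_apply osmult_apply ocomp_apply oone_apply)
    moreover have "Xop i (Yop i r) = (\<lambda>a. if 0 < a i then Yop i r (a(i := a i - 1)) else 0)"
      by (rule Xop_apply[OF Yop_Pn[OF r]])
    ultimately show ?thesis using r by (simp add: Yop_apply padd_def psmult_def fun_eq_iff)
  qed
  have "ocomp e a \<in> Sn" using a(1) by (simp add: e_def Sn.intros)
  moreover have "\<forall>q\<in>Pn. ocomp e a q = (\<lambda>\<alpha>. if \<forall>j\<in>insert i S. \<alpha> j = 0 then q \<alpha> else 0)"
    using a by (auto simp: ocomp_apply e_apply Sn_Pn fun_eq_iff)
  ultimately show ?case by blast
qed

definition const_proj :: "('n::finite, 'k::field_char_0) op_n" where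
  "const_proj = (SOME E. E \<in> Sn \<and> (\<forall>q\<in>Pn. E q = psmult (q (\<lambda>_. 0)) pone))"

lemma const_proj_exists:
  "\<exists>E\<in>(Sn :: ('n::finite, 'k::field_char_0) op_n set). \<forall>q\<in>Pn. E q = psmult (q (\<lambda>_. 0)) pone"
proof -
  obtain a where a: "a \<in> (Sn :: ('n, 'k) op_n set)"
      "\<forall>q\<in>Pn. a q = (\<lambda>\<alpha>. if \<forall>j\<in>UNIV. \<alpha> j = 0 then q \<alpha> else 0)"
    using support_projection_in_Sn[of UNIV] by auto
  have zero_iff: "(\<forall>j. \<alpha> j = 0) \<longleftrightarrow> \<alpha> = (\<lambda>_. 0)" for \<alpha> :: "'n \<Rightarrow> nat"
    by (auto simp: fun_eq_iff)
  have "\<forall>q\<in>Pn. a q = psmult (q (\<lambda>_. 0)) pone"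
    using a(2) by (intro ballI ext) (simp add: zero_iff psmult_def pone_def xpow_def)
  then show ?thesis using a(1) by blast
qed

lemma const_proj:
  "const_proj \<in> Sn"
  "q \<in> Pn \<Longrightarrow> const_proj q = psmult (q (\<lambda>_. 0)) pone"
  using someI_ex[OF const_proj_exists[unfolded Bex_def]] unfolding const_proj_def by auto

text \<open>Any polynomial with a nonzero coefficient can be sent to 1: shift that coefficient
  to the constant term, project, and rescale.\<close>

lemma reach_one:
  assumes u: "u \<in> Pn" and coeff: "u \<beta> \<noteq> 0"
  shows "\<exists>a\<in>(Sn :: ('n::finite, 'k::field_char_0) op_n set). a u = pone"
proof -
  obtain s where s: "s \<in> (Sn :: ('n, 'k) op_n set)" "\<forall>q\<in>Pn. s q = (\<lambda>\<alpha>. q (\<lambda>j. \<alpha> j + \<beta> j))"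
    using shift_in_Sn by blast
  define a where "a = osmult (1 / u \<beta>) (ocomp const_proj s)"
  have "a \<in> Sn" unfolding a_def by (intro Sn.smult Sn.comp s(1) const_proj(1))
  moreover have "a u = pone"
  proof -
    have su: "s u \<in> Pn" "s u (\<lambda>_. 0) = u \<beta>" using Sn_Pn[OF s(1) u] s(2) u by auto
    have "a u = psmult (1 / u \<beta>) (const_proj (s u))"
      unfolding a_def using u by (simp add: osmult_apply ocomp_apply)
    also have "\<dots> = psmult (1 / u \<beta>) (psmult (u \<beta>) pone)" using const_proj(2)[OF su(1)] su(2) by simp
    also have "\<dots> = pone" using coeff by (simp add: psmult_def fun_eq_iff)
    finally show ?thesis .
  qed
  ultimately show ?thesis by blast
qed

lemma Xop_xpow:
  assumes "0 < g i"
  shows "Xop i (xpow (g(i := g i - 1))) = (xpow g :: ('n::finite, 'k::field_char_0) poly_n)"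
proof
  fix \<alpha> :: "'n \<Rightarrow> nat"
  have iff: "(0 < \<alpha> i \<and> \<alpha>(i := \<alpha> i - 1) = g(i := g i - 1)) \<longleftrightarrow> \<alpha> = g"
  proof
    assume h: "0 < \<alpha> i \<and> \<alpha>(i := \<alpha> i - 1) = g(i := g i - 1)"
    then have "\<alpha> i - 1 = g i - 1" by (metis fun_upd_same)
    then have "\<alpha> i = g i" using h assms by linarith
    moreover have "\<alpha> j = g j" if "j \<noteq> i" for j using h that by (metis fun_upd_other)
    ultimately show "\<alpha> = g" by (metis ext)
  qed (use assms in auto)
  have "Xop i (xpow (g(i := g i - 1))) \<alpha>
      = (if 0 < \<alpha> i \<and> \<alpha>(i := \<alpha> i - 1) = g(i := g i - 1) then 1 else (0::'k))"
    unfolding Xop_apply[OF xpow_Pn] by (simp add: xpow_def)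
  also have "\<dots> = xpow g \<alpha>" using iff by (simp add: xpow_def)
  finally show "Xop i (xpow (g(i := g i - 1))) \<alpha> = (xpow g :: ('n, 'k) poly_n) \<alpha>" .
qed

lemma reach_monomial_from_one:
  "\<exists>a\<in>(Sn :: ('n::finite, 'k::field_char_0) op_n set). a pone = xpow \<gamma>"
proof (induction \<gamma> rule: measure_induct_rule[where f="\<lambda>\<gamma>. sum \<gamma> UNIV"])
  case (less \<gamma>)
  show ?case
  proof (cases "\<gamma> = (\<lambda>_. 0)")
    case True
    then show ?thesis by (intro bexI[of _ oone]) (simp_all add: oone_apply[OF xpow_Pn] pone_def Sn.one)
  next
    case False
    then obtain i where i: "0 < \<gamma> i" by (auto simp: fun_eq_iff)
    then obtain a where a: "a \<in> (Sn :: ('n, 'k) op_n set)" "a pone = xpow (\<gamma>(i := \<gamma> i - 1))"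
      using less.IH total_degree_decrement by blast
    have "ocomp (Xop i) a \<in> Sn" using a(1) by (simp add: Sn.intros)
    moreover have "ocomp (Xop i) a pone = xpow \<gamma>"
      unfolding ocomp_apply[OF pone_Pn] a(2) by (rule Xop_xpow[of \<gamma> i, OF i])
    ultimately show ?thesis by blast
  qed
qed

lemma reach_all_from_monomials:
  assumes u: "u \<in> Pn"
    and monomials: "\<And>\<gamma>. \<exists>a\<in>(Sn :: ('n::finite, 'k::field_char_0) op_n set). a u = xpow \<gamma>"
    and S: "finite S"
  shows "\<forall>w. {\<alpha>. w \<alpha> \<noteq> 0} \<subseteq> S \<longrightarrow> (\<exists>a\<in>(Sn :: ('n, 'k) op_n set). a u = w)"
  using S
proof (induction S rule: finite_induct)
  case empty
  have "osmult 0 oone u = w" if "{\<alpha>. w \<alpha> \<noteq> 0} \<subseteq> {}" for w :: "('n, 'k) poly_n"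
    using that u by (auto simp: zero_op_apply fun_eq_iff)
  then show ?case using zero_op_in_Sn by blast
next
  case (insert \<gamma> S)
  show ?case
  proof (intro allI impI)
    fix w :: "('n, 'k) poly_n" assume w: "{\<alpha>. w \<alpha> \<noteq> 0} \<subseteq> insert \<gamma> S"
    have "{\<alpha>. (w(\<gamma> := 0)) \<alpha> \<noteq> 0} \<subseteq> S" using w by auto
    then obtain a where a: "a \<in> Sn" "a u = w(\<gamma> := 0)" using insert.IH by blast
    obtain b where b: "b \<in> Sn" "b u = xpow \<gamma>" using monomials by blast
    have "oadd a (osmult (w \<gamma>) b) \<in> Sn" using a b by (simp add: Sn.intros)
    moreover have "oadd a (osmult (w \<gamma>) b) u = w"
      using u a b by (intro ext) (auto simp: oadd_apply osmult_apply padd_def psmult_def xpow_def)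
    ultimately show "\<exists>a\<in>Sn. a u = w" by blast
  qed
qed

lemma Sn_transitive:
  assumes u: "u \<in> Pn" and nonzero: "u \<noteq> (\<lambda>_. 0)" and w: "w \<in> Pn"
  shows "\<exists>a\<in>(Sn :: ('n::finite, 'k::field_char_0) op_n set). a u = w"
proof -
  obtain \<beta> where "u \<beta> \<noteq> 0" using nonzero by auto
  then obtain a where a: "a \<in> (Sn :: ('n, 'k) op_n set)" "a u = pone"
    using reach_one[OF u] by blast
  have "\<exists>c\<in>(Sn :: ('n, 'k) op_n set). c u = xpow \<gamma>" for \<gamma>
  proof -
    obtain b where "b \<in> (Sn :: ('n, 'k) op_n set)" "b pone = xpow \<gamma>"
      using reach_monomial_from_one by blast
    then have "ocomp b a \<in> Sn" "ocomp b a u = xpow \<gamma>"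
      using a u by (simp_all add: Sn.intros ocomp_apply)
    then show ?thesis by blast
  qed
  moreover have "finite {\<alpha>. w \<alpha> \<noteq> 0}" using w by (simp add: Pn_def)
  ultimately show ?thesis using reach_all_from_monomials[OF u] by blast
qed

section \<open>Conjugation by invertible linear maps\<close>

lemma AutK_facts:
  assumes "\<phi> \<in> AutK"
  shows AutK_Pn: "\<And>p. p \<in> Pn \<Longrightarrow> \<phi> p \<in> Pn"
    and AutK_inv_Pn: "\<And>p. p \<in> Pn \<Longrightarrow> oinv \<phi> p \<in> Pn"
    and AutK_inv_right: "\<And>p. p \<in> Pn \<Longrightarrow> \<phi> (oinv \<phi> p) = p"
    and AutK_inv_left: "\<And>p. p \<in> Pn \<Longrightarrow> oinv \<phi> (\<phi> p) = p"
    and AutK_add: "\<And>p q. p \<in> Pn \<Longrightarrow> q \<in> Pn \<Longrightarrow> \<phi> (padd p q) = padd (\<phi> p) (\<phi> q)"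
    and AutK_smult: "\<And>p c. p \<in> Pn \<Longrightarrow> \<phi> (psmult c p) = psmult c (\<phi> p)"
    and AutK_inj: "inj_on \<phi> Pn"
proof -
  have A: "\<phi> \<in> Pn \<rightarrow>\<^sub>E Pn" "lin_on_Pn \<phi>" "bij_betw \<phi> Pn Pn"
    using assms by (auto simp: AutK_def)
  show "\<And>p. p \<in> Pn \<Longrightarrow> \<phi> p \<in> Pn" using A(1) by auto
  show "\<And>p. p \<in> Pn \<Longrightarrow> oinv \<phi> p \<in> Pn"
    using A(3) unfolding oinv_def bij_betw_def by (auto intro: inv_into_into)
  show "\<And>p. p \<in> Pn \<Longrightarrow> \<phi> (oinv \<phi> p) = p"
    using A(3) unfolding oinv_def by (simp add: bij_betw_inv_into_right)
  show "\<And>p. p \<in> Pn \<Longrightarrow> oinv \<phi> (\<phi> p) = p"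
    using A(1,3) unfolding oinv_def by (auto simp: bij_betw_inv_into_left)
  show "\<And>p q. p \<in> Pn \<Longrightarrow> q \<in> Pn \<Longrightarrow> \<phi> (padd p q) = padd (\<phi> p) (\<phi> q)"
    and "\<And>p c. p \<in> Pn \<Longrightarrow> \<phi> (psmult c p) = psmult c (\<phi> p)"
    using A(2) unfolding lin_on_Pn_def by blast+
  show "inj_on \<phi> Pn" using A(3) by (simp add: bij_betw_def)
qed

lemma conj_op_apply: "p \<in> Pn \<Longrightarrow> conj_op \<phi> a p = \<phi> (a (oinv \<phi> p))"
  by (simp add: conj_op_def ocomp_apply)

lemma conj_op_extensional: "conj_op \<phi> a \<in> extensional Pn"
  by (simp add: conj_op_def ops_extensional)

lemma conj_op_hom:
  fixes \<phi> a b :: "('n::finite, 'k::field_char_0) op_n"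
  assumes phi: "\<phi> \<in> AutK" and a: "a ` Pn \<subseteq> Pn" and b: "b ` Pn \<subseteq> Pn"
  shows "conj_op \<phi> (oadd a b) = oadd (conj_op \<phi> a) (conj_op \<phi> b)"
    and "conj_op \<phi> (ocomp a b) = ocomp (conj_op \<phi> a) (conj_op \<phi> b)"
    and "conj_op \<phi> (osmult c a) = osmult c (conj_op \<phi> a)"
proof -
  note P = AutK_facts[OF phi]
  have ap: "a p \<in> Pn" "b p \<in> Pn" if "p \<in> Pn" for p using a b that by auto
  show "conj_op \<phi> (oadd a b) = oadd (conj_op \<phi> a) (conj_op \<phi> b)"
    by (rule extensionalityI[OF conj_op_extensional ops_extensional(2)])
      (simp add: conj_op_apply oadd_apply ap P)
  show "conj_op \<phi> (ocomp a b) = ocomp (conj_op \<phi> a) (conj_op \<phi> b)"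
    by (rule extensionalityI[OF conj_op_extensional ops_extensional(4)])
      (simp add: conj_op_apply ocomp_apply ap P)
  show "conj_op \<phi> (osmult c a) = osmult c (conj_op \<phi> a)"
    by (rule extensionalityI[OF conj_op_extensional ops_extensional(3)])
      (simp add: conj_op_apply osmult_apply ap P)
qed

lemma conj_op_oone:
  fixes \<phi> :: "('n::finite, 'k::field_char_0) op_n"
  assumes phi: "\<phi> \<in> AutK"
  shows "conj_op \<phi> oone = oone"
  by (rule extensionalityI[OF conj_op_extensional ops_extensional(1)])
    (simp add: conj_op_apply oone_apply AutK_facts[OF phi])

lemma conj_op_inj:
  fixes \<phi> :: "('n::finite, 'k::field_char_0) op_n"
  assumes phi: "\<phi> \<in> AutK"
  shows "inj_on (conj_op \<phi>) {a \<in> extensional Pn. a ` Pn \<subseteq> Pn}"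
proof (rule inj_onI)
  fix a b assume a: "a \<in> {a \<in> extensional Pn. a ` Pn \<subseteq> Pn}"
    and b: "b \<in> {a \<in> extensional Pn. a ` Pn \<subseteq> Pn}" and eq: "conj_op \<phi> a = conj_op \<phi> b"
  show "a = b"
  proof (rule extensionalityI[of a Pn b])
    fix p :: "('n, 'k) poly_n" assume p: "p \<in> Pn"
    have "\<phi> (a p) = \<phi> (b p)"
      using conj_op_apply[of "\<phi> p" \<phi>] eq p AutK_facts[OF phi] by metis
    then show "a p = b p" using AutK_inj[OF phi] a b p by (auto dest: inj_onD)
  qed (use a b in auto)
qed

lemma sigma_op_in_Gn:
  fixes \<phi> :: "('n::finite, 'k::field_char_0) op_n"
  assumes phi: "\<phi> \<in> AutK" and normalises: "conj_op \<phi> ` Sn = Sn"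
  shows "sigma_op \<phi> \<in> Gn"
proof -
  have Sn_sub: "Sn \<subseteq> {a \<in> extensional Pn. a ` Pn \<subseteq> Pn}"
    using Sn_extensional Sn_Pn by blast
  have maps: "a ` Pn \<subseteq> Pn" if "a \<in> Sn" for a :: "('n, 'k) op_n" using that Sn_Pn by blast
  have sigma: "sigma_op \<phi> a = conj_op \<phi> a" if "a \<in> Sn" for a
    using that by (simp add: sigma_op_def)
  have "bij_betw (conj_op \<phi>) Sn Sn"
    using normalises inj_on_subset[OF conj_op_inj[OF phi] Sn_sub] by (simp add: bij_betw_def)
  then have "bij_betw (sigma_op \<phi>) Sn Sn" using bij_betw_cong[of Sn "sigma_op \<phi>"] sigma by simp
  moreover have "sigma_op \<phi> \<in> Sn \<rightarrow>\<^sub>E Sn"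
    unfolding sigma_op_def using normalises by (auto simp: restrict_PiE_iff)
  moreover have "sigma_op \<phi> (oadd a b) = oadd (sigma_op \<phi> a) (sigma_op \<phi> b)"
    and "sigma_op \<phi> (ocomp a b) = ocomp (sigma_op \<phi> a) (sigma_op \<phi> b)"
    and "sigma_op \<phi> (osmult c a) = osmult c (sigma_op \<phi> a)"
    if "a \<in> Sn" "b \<in> Sn" for a b c
    using that conj_op_hom[OF phi maps maps] by (simp_all add: sigma Sn.intros)
  moreover have "sigma_op \<phi> oone = oone"
    using conj_op_oone[OF phi] by (simp add: sigma Sn.one)
  ultimately show ?thesis unfolding Gn_def by blast
qed

section \<open>Every automorphism of S_n is inner\<close>

locale Sn_automorphism =
  fixes \<sigma> :: "('n::finite, 'k::field_char_0) op_n \<Rightarrow> ('n, 'k) op_n"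
  assumes in_Gn: "\<sigma> \<in> Gn"
begin

lemma maps_Sn: "a \<in> Sn \<Longrightarrow> \<sigma> a \<in> Sn"
  and extensional_Sn: "\<sigma> \<in> extensional Sn"
  and bij: "bij_betw \<sigma> Sn Sn"
  and hom_add: "a \<in> Sn \<Longrightarrow> b \<in> Sn \<Longrightarrow> \<sigma> (oadd a b) = oadd (\<sigma> a) (\<sigma> b)"
  and hom_comp: "a \<in> Sn \<Longrightarrow> b \<in> Sn \<Longrightarrow> \<sigma> (ocomp a b) = ocomp (\<sigma> a) (\<sigma> b)"
  and hom_smult: "a \<in> Sn \<Longrightarrow> \<sigma> (osmult c a) = osmult c (\<sigma> a)"
  and hom_one: "\<sigma> oone = oone"
  using in_Gn unfolding Gn_def by (auto simp: PiE_iff)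

text \<open>The image of the constant-term projection E under sigma is a nonzero idempotent,
  so it fixes some nonzero vector.\<close>

lemma const_proj_fixed_vector: "\<exists>w. w \<in> Pn \<and> w \<noteq> (\<lambda>_. 0) \<and> \<sigma> const_proj w = w"
proof -
  let ?E = "const_proj :: ('n, 'k) op_n" and ?Z = "osmult 0 oone :: ('n, 'k) op_n"
  have idem: "ocomp ?E ?E = ?E"
    by (rule extensionalityI[OF ops_extensional(4) Sn_extensional[OF const_proj(1)]])
      (simp add: ocomp_apply const_proj(2) psmult_Pn pone_Pn, simp add: psmult_def pone_def xpow_def)
  have "?E pone = pone" by (simp add: const_proj(2) pone_Pn) (simp add: psmult_def pone_def xpow_def)
  then have "?E \<noteq> ?Z" using zero_op_apply[OF pone_Pn] pone_nonzero by metis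
  moreover have "\<sigma> ?Z = ?Z" using hom_smult[OF Sn.one, of 0] hom_one by simp
  ultimately have "\<sigma> ?E \<noteq> ?Z"
    using bij const_proj(1) zero_op_in_Sn unfolding bij_betw_def by (metis inj_onD)
  then obtain v where v: "v \<in> Pn" "\<sigma> ?E v \<noteq> ?Z v"
    using extensionalityI[OF Sn_extensional[OF maps_Sn[OF const_proj(1)]]
        Sn_extensional[OF zero_op_in_Sn]] by blast
  let ?w = "\<sigma> ?E v"
  have "\<sigma> ?E ?w = ocomp (\<sigma> ?E) (\<sigma> ?E) v" using v(1) by (simp add: ocomp_apply)
  also have "\<dots> = ?w" using hom_comp[OF const_proj(1) const_proj(1)] idem by simp
  finally have "\<sigma> ?E ?w = ?w" .
  moreover have "?w \<in> Pn" using Sn_Pn[OF maps_Sn[OF const_proj(1)] v(1)] .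
  moreover have "?w \<noteq> (\<lambda>_. 0)" using v(2) zero_op_apply[OF v(1)] by simp
  ultimately show ?thesis by blast
qed

definition w0 :: "('n, 'k) poly_n" where
  "w0 = (SOME w. w \<in> Pn \<and> w \<noteq> (\<lambda>_. 0) \<and> \<sigma> const_proj w = w)"

lemma w0: "w0 \<in> Pn" "w0 \<noteq> (\<lambda>_. 0)" "\<sigma> const_proj w0 = w0"
  using someI_ex[OF const_proj_fixed_vector] unfolding w0_def by auto

text \<open>sigma a w0 depends only on a 1, because a 1 = b 1 forces a E = b E and
  sigma E fixes w0.\<close>

lemma orbit_well_defined:
  assumes a: "a \<in> Sn" and b: "b \<in> Sn" and eq: "a pone = b pone"
  shows "\<sigma> a w0 = \<sigma> b w0"
proof -
  have absorb: "\<sigma> c w0 = \<sigma> (ocomp c const_proj) w0" if c: "c \<in> Sn" for c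
    using w0 hom_comp[OF c const_proj(1)] by (simp add: ocomp_apply)
  have "ocomp a const_proj = ocomp b const_proj"
    by (rule extensionalityI[OF ops_extensional(4) ops_extensional(4)])
      (simp add: ocomp_apply const_proj(2) Sn_smult pone_Pn a b eq)
  then show ?thesis using absorb[OF a] absorb[OF b] by simp
qed

text \<open>The intertwiner phi: on the orbit of 1 it is given by phi (a 1) = sigma a w0,
  and by transitivity that orbit is all of P_n.\<close>

definition intertwiner :: "('n, 'k) op_n" where
  "intertwiner = restrict (\<lambda>p. \<sigma> (SOME a. a \<in> Sn \<and> a pone = p) w0) Pn"

lemma pone_orbit: "p \<in> Pn \<Longrightarrow> \<exists>a\<in>(Sn :: ('n, 'k) op_n set). a pone = p"
  using Sn_transitive[OF pone_Pn pone_nonzero] .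

lemma intertwiner_orbit:
  assumes a: "a \<in> Sn"
  shows "intertwiner (a pone) = \<sigma> a w0"
proof -
  let ?b = "SOME b. b \<in> Sn \<and> b pone = a pone"
  have b: "?b \<in> Sn \<and> ?b pone = a pone" using someI_ex[of "\<lambda>b. b \<in> Sn \<and> b pone = a pone"] a by blast
  have "intertwiner (a pone) = \<sigma> ?b w0"
    using Sn_Pn[OF a pone_Pn] by (simp add: intertwiner_def)
  also have "\<dots> = \<sigma> a w0" using orbit_well_defined b a by blast
  finally show ?thesis .
qed

lemma intertwiner_Pn:
  assumes p: "p \<in> Pn"
  shows "intertwiner p \<in> Pn"
proof -
  obtain a where a: "a \<in> Sn" "a pone = p" using pone_orbit[OF p] by blast
  then show ?thesis using intertwiner_orbit[OF a(1)] Sn_Pn[OF maps_Sn[OF a(1)] w0(1)] by simp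
qed

lemma intertwiner_one: "intertwiner pone = w0"
  using intertwiner_orbit[OF Sn.one] hom_one w0(1) by (simp add: oone_apply pone_Pn)

lemma intertwiner_commutes:
  assumes a: "a \<in> Sn" and p: "p \<in> Pn"
  shows "intertwiner (a p) = \<sigma> a (intertwiner p)"
proof -
  obtain b where b: "b \<in> Sn" "b pone = p" using pone_orbit[OF p] by blast
  have "intertwiner (a p) = intertwiner (ocomp a b pone)" using b by (simp add: ocomp_apply pone_Pn)
  also have "\<dots> = \<sigma> (ocomp a b) w0" using intertwiner_orbit Sn.comp[OF a b(1)] by blast
  also have "\<dots> = \<sigma> a (\<sigma> b w0)" using hom_comp[OF a b(1)] w0(1) by (simp add: ocomp_apply)
  also have "\<dots> = \<sigma> a (intertwiner p)" using intertwiner_orbit[OF b(1)] b(2) by simp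
  finally show ?thesis .
qed

lemma intertwiner_add:
  assumes p: "p \<in> Pn" and q: "q \<in> Pn"
  shows "intertwiner (padd p q) = padd (intertwiner p) (intertwiner q)"
proof -
  obtain a b where a: "a \<in> Sn" "a pone = p" and b: "b \<in> Sn" "b pone = q"
    using pone_orbit[OF p] pone_orbit[OF q] by blast
  have "intertwiner (padd p q) = intertwiner (oadd a b pone)" using a b by (simp add: oadd_apply pone_Pn)
  also have "\<dots> = \<sigma> (oadd a b) w0" using intertwiner_orbit Sn.add[OF a(1) b(1)] by blast
  also have "\<dots> = padd (\<sigma> a w0) (\<sigma> b w0)" using hom_add[OF a(1) b(1)] w0(1) by (simp add: oadd_apply)
  finally show ?thesis using intertwiner_orbit[OF a(1)] intertwiner_orbit[OF b(1)] a(2) b(2) by simp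
qed

lemma intertwiner_smult:
  assumes p: "p \<in> Pn"
  shows "intertwiner (psmult c p) = psmult c (intertwiner p)"
proof -
  obtain a where a: "a \<in> Sn" "a pone = p" using pone_orbit[OF p] by blast
  have "intertwiner (psmult c p) = intertwiner (osmult c a pone)" using a by (simp add: osmult_apply pone_Pn)
  also have "\<dots> = \<sigma> (osmult c a) w0" using intertwiner_orbit Sn.smult[OF a(1)] by blast
  also have "\<dots> = psmult c (\<sigma> a w0)" using hom_smult[OF a(1)] w0(1) by (simp add: osmult_apply)
  finally show ?thesis using intertwiner_orbit[OF a(1)] a(2) by simp
qed

text \<open>The kernel of phi is trivial: a nonzero d is sent to 1 by some a, and then
  w0 = phi (a d) = sigma a (phi d).\<close>

lemma intertwiner_kernel:
  assumes d: "d \<in> Pn" and zero: "intertwiner d = (\<lambda>_. 0)"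
  shows "d = (\<lambda>_. 0)"
proof (rule ccontr)
  assume "d \<noteq> (\<lambda>_. 0)"
  then obtain a where a: "a \<in> Sn" "a d = pone" using Sn_transitive[OF d _ pone_Pn] by blast
  have "w0 = \<sigma> a (intertwiner d)" using intertwiner_commutes[OF a(1) d] a(2) intertwiner_one by simp
  also have "\<dots> = (\<lambda>_. 0)" using zero Sn_zero[OF maps_Sn[OF a(1)]] by simp
  finally show False using w0(2) by simp
qed

lemma intertwiner_inj: "inj_on intertwiner Pn"
proof (rule inj_onI)
  fix p q :: "('n, 'k) poly_n" assume p: "p \<in> Pn" and q: "q \<in> Pn" and eq: "intertwiner p = intertwiner q"
  define d where "d = padd p (psmult (-1) q)"
  have d: "d \<in> Pn" unfolding d_def using p q by (simp add: padd_Pn psmult_Pn)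
  have "intertwiner d = padd (intertwiner p) (psmult (-1) (intertwiner q))"
    unfolding d_def using intertwiner_add[OF p psmult_Pn[OF q]] intertwiner_smult[OF q] by simp
  then have "d = (\<lambda>_. 0)" using intertwiner_kernel[OF d] eq by (simp add: padd_def psmult_def)
  then show "p = q" unfolding d_def padd_def psmult_def by (simp add: fun_eq_iff)
qed

lemma intertwiner_surj: "intertwiner ` Pn = Pn"
proof
  show "intertwiner ` Pn \<subseteq> Pn" using intertwiner_Pn by blast
  show "Pn \<subseteq> intertwiner ` Pn"
  proof
    fix q :: "('n, 'k) poly_n" assume q: "q \<in> Pn"
    obtain c where c: "c \<in> Sn" "c w0 = q" using Sn_transitive[OF w0(1,2) q] by blast
    then obtain a where a: "a \<in> Sn" "c = \<sigma> a" using bij unfolding bij_betw_def by blast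
    then have "intertwiner (a pone) = q" using intertwiner_orbit c(2) by simp
    then show "q \<in> intertwiner ` Pn" using Sn_Pn[OF a(1) pone_Pn] by blast
  qed
qed

lemma intertwiner_AutK: "intertwiner \<in> AutK"
proof -
  have "intertwiner \<in> extensional Pn" unfolding intertwiner_def by (rule restrict_extensional)
  then have "intertwiner \<in> Pn \<rightarrow>\<^sub>E Pn" using intertwiner_Pn by (simp add: PiE_iff)
  then show ?thesis
    unfolding AutK_def lin_on_Pn_def bij_betw_def
    using intertwiner_inj intertwiner_surj intertwiner_add intertwiner_smult by blast
qed

lemma conj_intertwiner: "a \<in> Sn \<Longrightarrow> conj_op intertwiner a = \<sigma> a"
proof (rule extensionalityI[OF conj_op_extensional Sn_extensional[OF maps_Sn]])
  fix p :: "('n, 'k) poly_n" assume a: "a \<in> Sn" and p: "p \<in> Pn"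
  have "conj_op intertwiner a p = intertwiner (a (oinv intertwiner p))" by (rule conj_op_apply[OF p])
  also have "\<dots> = \<sigma> a p"
    using intertwiner_commutes[OF a AutK_inv_Pn[OF intertwiner_AutK p]]
      AutK_inv_right[OF intertwiner_AutK p] by simp
  finally show "conj_op intertwiner a p = \<sigma> a p" .
qed

theorem inner: "\<sigma> = sigma_op intertwiner \<and> intertwiner \<in> AutK \<and> conj_op intertwiner ` Sn = Sn"
proof (intro conjI intertwiner_AutK)
  show "\<sigma> = sigma_op intertwiner"
    by (rule extensionalityI[OF extensional_Sn])
      (simp_all add: sigma_op_def conj_intertwiner)
  show "conj_op intertwiner ` Sn = Sn"
    using conj_intertwiner bij unfolding bij_betw_def by (metis image_cong)
qed

end

theorem theorem3p2:
  shows "(Gn :: (('n::finite, 'k::field_char_0) op_n \<Rightarrow> ('n, 'k) op_n) set)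
    = {sigma_op \<phi> | \<phi>. \<phi> \<in> AutK \<and> conj_op \<phi> ` Sn = Sn}"
proof
  show "(Gn :: (('n, 'k) op_n \<Rightarrow> ('n, 'k) op_n) set) \<subseteq> {sigma_op \<phi> | \<phi>. \<phi> \<in> AutK \<and> conj_op \<phi> ` Sn = Sn}"
  proof
    fix \<sigma> :: "('n, 'k) op_n \<Rightarrow> ('n, 'k) op_n" assume "\<sigma> \<in> Gn"
    then interpret Sn_automorphism \<sigma> by unfold_locales
    show "\<sigma> \<in> {sigma_op \<phi> | \<phi>. \<phi> \<in> AutK \<and> conj_op \<phi> ` Sn = Sn}" using inner by blast
  qed
  show "{sigma_op \<phi> | \<phi>. \<phi> \<in> AutK \<and> conj_op \<phi> ` Sn = Sn} \<subseteq> (Gn :: (('n, 'k) op_n \<Rightarrow> ('n, 'k) op_n) set)"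
    using sigma_op_in_Gn by blast
qed

end
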